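(* For every $n$ there exists a constant $C_n$ such that for any $t\ge0$, any $n\times n$ transition rate matrix $Q=(q_{ij})$ and any $\lambda>-\sum_{i=1}^n q_{ii}$, the entries of the matrix $e^{-\lambda t}e^{-Qt}$ are bounded in absolute value by $C_n$.
   Context: A transition rate matrix is a real matrix with non-negative off-diagonal entries and non-positive row sums (defective/killed chains allowed). *)

theory Defs
  imports "HOL-Analysis.Analysis"
begin

primrec matpow :: "('a::semiring_1)^'n^'n \<Rightarrow> nat \<Rightarrow> 'a^'n^'n" where
  "matpow A 0 = mat 1"
| "matpow A (Suc k) = A ** matpow A k"

definition mexp :: "real^'n^'n \<Rightarrow> real^'n^'n" where
  "mexp A = (\<Sum>k. (1 / fact k) *\<^sub>R matpow A k)"

definition rate_matrix :: "real^'n^'n \<Rightarrow> bool" where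
  "rate_matrix Q \<longleftrightarrow> (\<forall>i j. i \<noteq> j \<longrightarrow> Q $ i $ j \<ge> 0) \<and> (\<forall>i. (\<Sum>j\<in>UNIV. Q $ i $ j) \<le> 0)"

end

theory Submission
  imports Defs
begin

text \<open>Every entry in row \<open>i\<close> of a rate matrix is bounded in absolute value by the outflow
  rate \<open>-q_ii\<close>, since the off-diagonal entries are non-negative and sum to at most \<open>-q_ii\<close>.
  A row-wise bound \<open>|B_im| \<le> b_i\<close> gives \<open>|(B^k)_ij| \<le> (\<Sum>b)^k\<close>, hence \<open>|(e^B)_ij| \<le> e^(\<Sum>b)\<close>.
  For \<open>B = -tQ\<close> this is \<open>e^(-t tr Q)\<close>, and the factor \<open>e^(-\<lambda>t)\<close> with \<open>\<lambda> > -tr Q\<close> brings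
  the product below \<open>1\<close>; so \<open>C_n = 1\<close> works for every \<open>n\<close>.\<close>

lemma rate_matrix_abs_le_neg_diag:
  assumes "rate_matrix Q"
  shows "\<bar>Q $ i $ j\<bar> \<le> - Q $ i $ i"
proof -
  have off: "\<And>m. m \<noteq> i \<Longrightarrow> Q $ i $ m \<ge> 0" and row: "(\<Sum>m\<in>UNIV. Q $ i $ m) \<le> 0"
    using assms unfolding rate_matrix_def by auto
  define s where "s = (\<Sum>m\<in>UNIV - {i}. Q $ i $ m)"
  have row_split: "(\<Sum>m\<in>UNIV. Q $ i $ m) = Q $ i $ i + s"
    unfolding s_def by (simp add: sum.remove)
  have "s \<ge> 0"
    unfolding s_def using off by (intro sum_nonneg) auto
  moreover have "Q $ i $ j \<le> s" if "j \<noteq> i"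
    unfolding s_def using that off by (intro member_le_sum) auto
  ultimately show ?thesis
    using row row_split off[of j] by (cases "j = i") auto
qed

lemma matpow_Suc_abs_le:
  fixes B :: "real^'n^'n"
  assumes b_nonneg: "\<And>i. b i \<ge> 0" and B_le: "\<And>i m. \<bar>B $ i $ m\<bar> \<le> b i"
  shows "\<bar>matpow B (Suc k) $ i $ j\<bar> \<le> b i * (sum b UNIV) ^ k"
proof (induction k arbitrary: i j)
  case 0
  show ?case using B_le[of i j] by simp
next
  case (Suc k)
  let ?s = "sum b UNIV"
  have "\<bar>matpow B (Suc (Suc k)) $ i $ j\<bar> = \<bar>\<Sum>m\<in>UNIV. B $ i $ m * matpow B (Suc k) $ m $ j\<bar>"
    by (simp add: matrix_matrix_mult_def)
  also have "\<dots> \<le> (\<Sum>m\<in>UNIV. \<bar>B $ i $ m\<bar> * \<bar>matpow B (Suc k) $ m $ j\<bar>)"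
    unfolding abs_mult[symmetric] by (rule sum_abs)
  also have "\<dots> \<le> (\<Sum>m\<in>UNIV. b i * (b m * ?s ^ k))"
  proof (rule sum_mono)
    fix m
    show "\<bar>B $ i $ m\<bar> * \<bar>matpow B (Suc k) $ m $ j\<bar> \<le> b i * (b m * ?s ^ k)"
      using B_le[of i m] Suc.IH[of m j] b_nonneg[of i] by (intro mult_mono) auto
  qed
  also have "\<dots> = b i * ?s ^ Suc k"
    by (simp add: sum_distrib_left sum_distrib_right mult_ac)
  finally show ?case .
qed

lemma matpow_abs_le:
  fixes B :: "real^'n^'n"
  assumes b_nonneg: "\<And>i. b i \<ge> 0" and B_le: "\<And>i m. \<bar>B $ i $ m\<bar> \<le> b i"
  shows "\<bar>matpow B k $ i $ j\<bar> \<le> (sum b UNIV) ^ k"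
proof (cases k)
  case 0
  then show ?thesis by (simp add: mat_def)
next
  case (Suc k')
  have "\<bar>matpow B k $ i $ j\<bar> \<le> b i * (sum b UNIV) ^ k'"
    using matpow_Suc_abs_le[OF b_nonneg B_le] Suc by blast
  also have "\<dots> \<le> sum b UNIV * (sum b UNIV) ^ k'"
    using b_nonneg by (intro mult_right_mono member_le_sum zero_le_power sum_nonneg) auto
  finally show ?thesis using Suc by simp
qed

lemma sums_vec:
  fixes f :: "nat \<Rightarrow> 'a::real_normed_vector^'n"
  assumes "\<And>i. (\<lambda>k. f k $ i) sums s $ i"
  shows "f sums s"
proof -
  have "(\<lambda>n. \<chi> i. \<Sum>k<n. f k $ i) \<longlonglongrightarrow> (\<chi> i. s $ i)"
    using assms unfolding sums_def by (intro tendsto_vec_lambda)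
  then show ?thesis
    unfolding sums_def by (simp add: sum_eq[symmetric])
qed

lemma mexp_nth_nth_sums:
  fixes B :: "real^'n^'n"
  assumes "\<And>i j. summable (\<lambda>k. matpow B k $ i $ j / fact k)"
  shows "(\<lambda>k. matpow B k $ i $ j / fact k) sums (mexp B $ i $ j)"
proof -
  define S where "S = (\<chi> i j. \<Sum>k. matpow B k $ i $ j / fact k)"
  have "(\<lambda>k. (1 / fact k) *\<^sub>R matpow B k) sums S"
    unfolding S_def using assms by (intro sums_vec) (simp add: summable_sums)
  then have "mexp B = S"
    unfolding mexp_def by (rule sums_unique[symmetric])
  then show ?thesis
    unfolding S_def using assms by (simp add: summable_sums)
qed

lemma mexp_abs_le:
  fixes B :: "real^'n^'n"
  assumes matpow_le: "\<And>k i j. \<bar>matpow B k $ i $ j\<bar> \<le> r ^ k"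
  shows "\<bar>mexp B $ i $ j\<bar> \<le> exp r"
proof -
  have entry_le: "norm (matpow B k $ i $ j / fact k) \<le> r ^ k / fact k" for k i j
    using matpow_le[of k i j] by (simp add: divide_right_mono)
  have exp_sums: "(\<lambda>k. r ^ k / fact k) sums exp r"
    using exp_converges[of r] by (simp add: divide_inverse_commute)
  have "\<And>i j. summable (\<lambda>k. matpow B k $ i $ j / fact k)"
    using summable_comparison_test'[OF sums_summable[OF exp_sums] entry_le] .
  then show ?thesis
    using norm_sums_le[OF mexp_nth_nth_sums exp_sums entry_le] by simp
qed

theorem lemma4:
  "\<exists>C::real. \<forall>t::real. \<forall>Q::real^'n^'n. \<forall>l::real.
     t \<ge> 0 \<longrightarrow> rate_matrix Q \<longrightarrow> l > - (\<Sum>i\<in>UNIV. Q $ i $ i) \<longrightarrow>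
     (\<forall>i j. \<bar>(exp (- l * t) *\<^sub>R mexp (- (t *\<^sub>R Q))) $ i $ j\<bar> \<le> C)"
proof (intro exI allI impI)
  fix t l :: real and Q :: "real^'n^'n" and i j
  assume t: "t \<ge> 0" and Q: "rate_matrix Q" and l: "l > - (\<Sum>i\<in>UNIV. Q $ i $ i)"
  define b where "b m = - t * Q $ m $ m" for m
  have b_nonneg: "b m \<ge> 0" for m
  proof -
    have "Q $ m $ m \<le> 0"
      using rate_matrix_abs_le_neg_diag[OF Q, of m m] by linarith
    then show ?thesis
      using t unfolding b_def by (simp add: mult_nonneg_nonpos)
  qed
  have "\<bar>(- (t *\<^sub>R Q)) $ m $ m'\<bar> \<le> b m" for m m'
    using mult_left_mono[OF rate_matrix_abs_le_neg_diag[OF Q, of m m'] t] t unfolding b_def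
    by (simp add: abs_mult)
  then have "\<bar>mexp (- (t *\<^sub>R Q)) $ i $ j\<bar> \<le> exp (sum b UNIV)"
    by (intro mexp_abs_le matpow_abs_le[OF b_nonneg])
  then have "\<bar>(exp (- l * t) *\<^sub>R mexp (- (t *\<^sub>R Q))) $ i $ j\<bar> \<le> exp (- l * t) * exp (sum b UNIV)"
    by (simp add: abs_mult)
  also have "\<dots> = exp (t * (- (\<Sum>m\<in>UNIV. Q $ m $ m) - l))"
    unfolding b_def by (simp add: exp_add[symmetric] sum_distrib_left sum_negf algebra_simps)
  also have "\<dots> \<le> 1"
    using t l by (simp add: mult_nonneg_nonpos)
  finally show "\<bar>(exp (- l * t) *\<^sub>R mexp (- (t *\<^sub>R Q))) $ i $ j\<bar> \<le> 1" .
qed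

end
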